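(* If $\phi$ is dinatural in its $k$-th variable and $\psi$ is dinatural in its $i$-th variable, then the $i$-th horizontal composite $\phi\ast_i\psi$ is dinatural in its $(i-1+k)$-th variable (the variable $A_k$).
   Context: Notation: $k$ also denotes $\{1,\dots,k\}$; $\mathbb C^\alpha=\mathbb C^{\alpha_1}\times\cdots$ with $\mathbb C^+=\mathbb C$, $\mathbb C^-=\mathbb C^{op}$; for $\mathbf A=(A_1,\dots,A_n)$, $\sigma\colon k\to n$, $\mathbf A\sigma=(A_{\sigma1},\dots,A_{\sigma k})$; a morphism in a contravariant argument is read in $\mathbb C^{op}$. A transformation $\phi\colon F\to G$ ($F\colon\mathbb C^\alpha\to\mathbb C$, $G\colon\mathbb C^\beta\to\mathbb C$) of type $|\alpha|\xrightarrow{\sigma}n\xleftarrow{\tau}|\beta|$ is a family $\phi_{\mathbf A}\colon F(\mathbf A\sigma)\to G(\mathbf A\tau)$, $\mathbf A\in\mathrm{Ob}(\mathbb C)^n$. $\mathbf A[X,Y/i]\sigma$ is the tuple whose $j$-th entry is $X$ if $\sigma j=i,\alpha_j=-$, $Y$ if $\sigma j=i,\alpha_j=+$, $A_{\sigma j}$ (or $1_{A_{\sigma j}}$ for morphisms) otherwise; $\mathbf A[X/i]=\mathbf A[X,X/i]$. $\phi$ is dinatural in its $i$-th variable if for all $A_j$ ($j\ne i$) and $f\colon A\to B$: $G(\mathbf A[A,f/i]\tau)\circ\phi_{\mathbf A[A/i]}\circ F(\mathbf A[f,A/i]\sigma)=G(\mathbf A[f,B/i]\tau)\circ\phi_{\mathbf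 A[B/i]}\circ F(\mathbf A[B,f/i]\sigma)$. Horizontal composition: let $F\colon\mathbb C^\alpha\to\mathbb C$, $G\colon\mathbb C^\beta\to\mathbb C$, $H\colon\mathbb C^\gamma\to\mathbb C$, $K\colon\mathbb C^\delta\to\mathbb C$, $\phi\colon F\to G$ of type $|\alpha|\xrightarrow{\sigma}n\xleftarrow{\tau}|\beta|$ with variables $\mathbf A=(A_1,\dots,A_n)$, and $\psi\colon H\to K$ of type $|\gamma|\xrightarrow{\eta}m\xleftarrow{\theta}|\delta|$ with variables $\mathbf B=(B_1,\dots,B_m)$, dinatural in its $i$-th variable. The $i$-th horizontal composite $\phi\ast_i\psi$ is the transformation with variables $\mathbf B[\mathbf A/i]=(B_1,\dots,B_{i-1},A_1,\dots,A_n,B_{i+1},\dots,B_m)$ (so $A_k$ is its $(i-1+k)$-th variable). Its domain functor is obtained from $H$ by substituting, into each argument position $u$ with $\eta u=i$, the functor $F$ if $\gamma_u=+$ and $G^{op}$ if $\gamma_u=-$ (other positions unchanged); its codomain functor is obtained from $K$ by substituting, into each position $v$ with $\theta v=i$, $G$ if $\delta_v=+$ and $F^{op}$ if $\delta_v=-$. In its type, an argument coming from the $j$-th argument of a copy of $F$ is assigned variable $A_{\sigma j}$, one coming from the $j$-th argument of a copy of $G$ variable $A_{\tau j}$, and an unchanged position $u$ of $H$ (resp. $v$ of $K$) variable $B_{\eta u}$ (resp. $B_{\theta v}$). Its component at $\mathbf B[\mathbf A/i]$ is the morphism $H(\mathbf B[G(\mathbf A\tau),F(\mathbf A\sigma)/i]\eta)\to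 K(\mathbf B[F(\mathbf A\sigma),G(\mathbf A\tau)/i]\theta)$ given by $K(\mathbf B[F(\mathbf A\sigma),\phi_{\mathbf A}/i]\theta)\circ\psi_{\mathbf B[F(\mathbf A\sigma)/i]}\circ H(\mathbf B[\phi_{\mathbf A},F(\mathbf A\sigma)/i]\eta)$, equal to $K(\mathbf B[\phi_{\mathbf A},G(\mathbf A\tau)/i]\theta)\circ\psi_{\mathbf B[G(\mathbf A\tau)/i]}\circ H(\mathbf B[G(\mathbf A\tau),\phi_{\mathbf A}/i]\eta)$ by dinaturality of $\psi$. *)

theory Defs
  imports Main
begin

text \<open>A category: a set of objects, a set of arrows, domain, codomain,
identities, and composition (Comp g f = g after f).\<close>

record ('o, 'a) cat =
  Obj  :: "'o set"
  Arr  :: "'a set"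
  Dom  :: "'a \<Rightarrow> 'o"
  Cod  :: "'a \<Rightarrow> 'o"
  Id   :: "'o \<Rightarrow> 'a"
  Comp :: "'a \<Rightarrow> 'a \<Rightarrow> 'a"

definition category :: "('o, 'a) cat \<Rightarrow> bool" where
  "category C \<longleftrightarrow>
     (\<forall>f \<in> Arr C. Dom C f \<in> Obj C \<and> Cod C f \<in> Obj C) \<and>
     (\<forall>a \<in> Obj C. Id C a \<in> Arr C \<and> Dom C (Id C a) = a \<and> Cod C (Id C a) = a) \<and>
     (\<forall>f \<in> Arr C. \<forall>g \<in> Arr C. Cod C f = Dom C g \<longrightarrow>
        Comp C g f \<in> Arr C \<and> Dom C (Comp C g f) = Dom C f \<and> Cod C (Comp C g f) = Cod C g) \<and>
     (\<forall>f \<in> Arr C. \<forall>g \<in> Arr C. \<forall>h \<in> Arr C. Cod C f = Dom C g \<longrightarrow> Cod C g = Dom C h \<longrightarrow>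
        Comp C h (Comp C g f) = Comp C (Comp C h g) f) \<and>
     (\<forall>f \<in> Arr C. Comp C f (Id C (Dom C f)) = f \<and> Comp C (Id C (Cod C f)) f = f)"

section \<open>Functors of mixed variance  C^alpha \<rightarrow> C\<close>

text \<open>A variance list alpha :: bool list, True = + (covariant), False = - (contravariant).  An arrow in a
contravariant argument is read in C^op, i.e. it is an arrow of C in the reverse direction.\<close>

record ('o, 'a) mvfun =
  fobj :: "'o list \<Rightarrow> 'o"
  farr :: "'a list \<Rightarrow> 'a"

definition src_tuple :: "('o, 'a) cat \<Rightarrow> bool list \<Rightarrow> 'a list \<Rightarrow> 'o list" where
  "src_tuple C \<alpha> fs = map (\<lambda>j. if \<alpha> ! j then Dom C (fs ! j) else Cod C (fs ! j)) [0..<length \<alpha>]"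

definition tgt_tuple :: "('o, 'a) cat \<Rightarrow> bool list \<Rightarrow> 'a list \<Rightarrow> 'o list" where
  "tgt_tuple C \<alpha> fs = map (\<lambda>j. if \<alpha> ! j then Cod C (fs ! j) else Dom C (fs ! j)) [0..<length \<alpha>]"

definition mvfunctor :: "('o, 'a) cat \<Rightarrow> bool list \<Rightarrow> ('o, 'a) mvfun \<Rightarrow> bool" where
  "mvfunctor C \<alpha> F \<longleftrightarrow>
     (\<forall>As. length As = length \<alpha> \<longrightarrow> set As \<subseteq> Obj C \<longrightarrow> fobj F As \<in> Obj C) \<and>
     (\<forall>fs. length fs = length \<alpha> \<longrightarrow> set fs \<subseteq> Arr C \<longrightarrow>
        farr F fs \<in> Arr C \<and> Dom C (farr F fs) = fobj F (src_tuple C \<alpha> fs)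
                         \<and> Cod C (farr F fs) = fobj F (tgt_tuple C \<alpha> fs)) \<and>
     (\<forall>As. length As = length \<alpha> \<longrightarrow> set As \<subseteq> Obj C \<longrightarrow>
        farr F (map (Id C) As) = Id C (fobj F As)) \<and>
     (\<forall>fs gs. length fs = length \<alpha> \<longrightarrow> length gs = length \<alpha> \<longrightarrow>
        set fs \<subseteq> Arr C \<longrightarrow> set gs \<subseteq> Arr C \<longrightarrow> tgt_tuple C \<alpha> fs = src_tuple C \<alpha> gs \<longrightarrow>
        farr F (map (\<lambda>j. if \<alpha> ! j then Comp C (gs ! j) (fs ! j) else Comp C (fs ! j) (gs ! j))
                    [0..<length \<alpha>])
        = Comp C (farr F gs) (farr F fs))"

section \<open>Transformations and dinaturality\<close>

text \<open>Indices are 0-based: the variables are A_0, ..., A_(n-1).  A type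
|alpha| --sigma--> n <--tau-- |beta| is represented by lists sigma, tau of
variable indices; the tuple A sigma is  map ((!) A) sigma.\<close>

definition transformation ::
  "('o, 'a) cat \<Rightarrow> ('o, 'a) mvfun \<Rightarrow> bool list \<Rightarrow> ('o, 'a) mvfun \<Rightarrow> bool list \<Rightarrow>
   nat list \<Rightarrow> nat list \<Rightarrow> nat \<Rightarrow> ('o list \<Rightarrow> 'a) \<Rightarrow> bool" where
  "transformation C F \<alpha> G \<beta> \<sigma> \<tau> n \<phi> \<longleftrightarrow>
     length \<sigma> = length \<alpha> \<and> length \<tau> = length \<beta> \<and>
     (\<forall>j \<in> set \<sigma>. j < n) \<and> (\<forall>j \<in> set \<tau>. j < n) \<and>
     (\<forall>A. length A = n \<longrightarrow> set A \<subseteq> Obj C \<longrightarrow>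
        \<phi> A \<in> Arr C \<and> Dom C (\<phi> A) = fobj F (map ((!) A) \<sigma>)
                   \<and> Cod C (\<phi> A) = fobj G (map ((!) A) \<tau>))"

text \<open>The arrow tuple  A[X,Y/i]sigma  (X at contravariant, Y at covariant
occurrences of variable i, identities elsewhere).\<close>

definition arr_subst ::
  "('o, 'a) cat \<Rightarrow> 'o list \<Rightarrow> 'a \<Rightarrow> 'a \<Rightarrow> nat \<Rightarrow> nat list \<Rightarrow> bool list \<Rightarrow> 'a list" where
  "arr_subst C A X Y i \<sigma> \<alpha> =
     map (\<lambda>j. if \<sigma> ! j = i then (if \<alpha> ! j then Y else X) else Id C (A ! (\<sigma> ! j)))
         [0..<length \<alpha>]"

definition dinatural ::
  "('o, 'a) cat \<Rightarrow> ('o, 'a) mvfun \<Rightarrow> bool list \<Rightarrow> nat list \<Rightarrow>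
   ('o, 'a) mvfun \<Rightarrow> bool list \<Rightarrow> nat list \<Rightarrow> nat \<Rightarrow> ('o list \<Rightarrow> 'a) \<Rightarrow> nat \<Rightarrow> bool" where
  "dinatural C F \<alpha> \<sigma> G \<beta> \<tau> n \<phi> i \<longleftrightarrow> i < n \<and>
     (\<forall>A f. length A = n \<longrightarrow> set A \<subseteq> Obj C \<longrightarrow> f \<in> Arr C \<longrightarrow>
        (let a = Dom C f; b = Cod C f in
          Comp C (farr G (arr_subst C A (Id C a) f i \<tau> \<beta>))
            (Comp C (\<phi> (A[i := a])) (farr F (arr_subst C A f (Id C a) i \<sigma> \<alpha>)))
          = Comp C (farr G (arr_subst C A f (Id C b) i \<tau> \<beta>))
            (Comp C (\<phi> (A[i := b])) (farr F (arr_subst C A (Id C b) f i \<sigma> \<alpha>)))))"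

section \<open>Horizontal composition\<close>

text \<open>Variables of the composite: B[A/i] = B_0..B_(i-1), A_0..A_(n-1), B_(i+1)..B_(m-1);
so A_k is variable i+k, and B_b (b \<noteq> i) is variable vshift n i b.\<close>

definition vshift :: "nat \<Rightarrow> nat \<Rightarrow> nat \<Rightarrow> nat" where
  "vshift n i b = (if b < i then b else b + n - 1)"

definition plug :: "nat list \<Rightarrow> (nat \<Rightarrow> 'x list \<Rightarrow> 'x) \<Rightarrow> 'x list \<Rightarrow> 'x list" where
  "plug ws g xs = map (\<lambda>u. g u (take (ws ! u) (drop (sum_list (take u ws)) xs))) [0..<length ws]"

text \<open>Domain functor: in H substitute F at covariant, G^op at contravariant positions u with eta u = i.\<close>

definition hc_dom_widths :: "bool list \<Rightarrow> bool list \<Rightarrow> bool list \<Rightarrow> nat list \<Rightarrow> nat \<Rightarrow> nat list" where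
  "hc_dom_widths \<alpha> \<beta> \<gamma> \<eta> i =
     map (\<lambda>u. if \<eta> ! u = i then (if \<gamma> ! u then length \<alpha> else length \<beta>) else 1) [0..<length \<gamma>]"

definition hc_dom_var :: "bool list \<Rightarrow> bool list \<Rightarrow> bool list \<Rightarrow> nat list \<Rightarrow> nat \<Rightarrow> bool list" where
  "hc_dom_var \<alpha> \<beta> \<gamma> \<eta> i =
     concat (map (\<lambda>u. if \<eta> ! u = i then (if \<gamma> ! u then \<alpha> else map Not \<beta>) else [\<gamma> ! u])
                 [0..<length \<gamma>])"

definition hc_dom_type ::
  "nat list \<Rightarrow> nat list \<Rightarrow> nat \<Rightarrow> bool list \<Rightarrow> nat list \<Rightarrow> nat \<Rightarrow> nat list" where
  "hc_dom_type \<sigma> \<tau> n \<gamma> \<eta> i =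
     concat (map (\<lambda>u. if \<eta> ! u = i then (if \<gamma> ! u then map ((+) i) \<sigma> else map ((+) i) \<tau>)
                      else [vshift n i (\<eta> ! u)])
                 [0..<length \<gamma>])"

definition hc_dom ::
  "bool list \<Rightarrow> bool list \<Rightarrow> bool list \<Rightarrow> nat list \<Rightarrow> nat \<Rightarrow>
   ('o, 'a) mvfun \<Rightarrow> ('o, 'a) mvfun \<Rightarrow> ('o, 'a) mvfun \<Rightarrow> ('o, 'a) mvfun" where
  "hc_dom \<alpha> \<beta> \<gamma> \<eta> i F G H =
     \<lparr> fobj = (\<lambda>Xs. fobj H (plug (hc_dom_widths \<alpha> \<beta> \<gamma> \<eta> i)
                (\<lambda>u ys. if \<eta> ! u = i then (if \<gamma> ! u then fobj F ys else fobj G ys) else hd ys) Xs)),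
       farr = (\<lambda>fs. farr H (plug (hc_dom_widths \<alpha> \<beta> \<gamma> \<eta> i)
                (\<lambda>u ys. if \<eta> ! u = i then (if \<gamma> ! u then farr F ys else farr G ys) else hd ys) fs)) \<rparr>"

text \<open>Codomain functor: in K substitute G at covariant, F^op at contravariant positions v with theta v = i.\<close>

definition hc_cod_widths :: "bool list \<Rightarrow> bool list \<Rightarrow> bool list \<Rightarrow> nat list \<Rightarrow> nat \<Rightarrow> nat list" where
  "hc_cod_widths \<alpha> \<beta> \<delta> \<theta> i =
     map (\<lambda>v. if \<theta> ! v = i then (if \<delta> ! v then length \<beta> else length \<alpha>) else 1) [0..<length \<delta>]"

definition hc_cod_var :: "bool list \<Rightarrow> bool list \<Rightarrow> bool list \<Rightarrow> nat list \<Rightarrow> nat \<Rightarrow> bool list" where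
  "hc_cod_var \<alpha> \<beta> \<delta> \<theta> i =
     concat (map (\<lambda>v. if \<theta> ! v = i then (if \<delta> ! v then \<beta> else map Not \<alpha>) else [\<delta> ! v])
                 [0..<length \<delta>])"

definition hc_cod_type ::
  "nat list \<Rightarrow> nat list \<Rightarrow> nat \<Rightarrow> bool list \<Rightarrow> nat list \<Rightarrow> nat \<Rightarrow> nat list" where
  "hc_cod_type \<sigma> \<tau> n \<delta> \<theta> i =
     concat (map (\<lambda>v. if \<theta> ! v = i then (if \<delta> ! v then map ((+) i) \<tau> else map ((+) i) \<sigma>)
                      else [vshift n i (\<theta> ! v)])
                 [0..<length \<delta>])"

definition hc_cod ::
  "bool list \<Rightarrow> bool list \<Rightarrow> bool list \<Rightarrow> nat list \<Rightarrow> nat \<Rightarrow>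
   ('o, 'a) mvfun \<Rightarrow> ('o, 'a) mvfun \<Rightarrow> ('o, 'a) mvfun \<Rightarrow> ('o, 'a) mvfun" where
  "hc_cod \<alpha> \<beta> \<delta> \<theta> i F G K =
     \<lparr> fobj = (\<lambda>Xs. fobj K (plug (hc_cod_widths \<alpha> \<beta> \<delta> \<theta> i)
                (\<lambda>v ys. if \<theta> ! v = i then (if \<delta> ! v then fobj G ys else fobj F ys) else hd ys) Xs)),
       farr = (\<lambda>fs. farr K (plug (hc_cod_widths \<alpha> \<beta> \<delta> \<theta> i)
                (\<lambda>v ys. if \<theta> ! v = i then (if \<delta> ! v then farr G ys else farr F ys) else hd ys) fs)) \<rparr>"

text \<open>Components of the i-th horizontal composite at X = B[A/i]:
 K(B[F(A sigma), phi_A/i]theta) o psi_(B[F(A sigma)/i]) o H(B[phi_A, F(A sigma)/i]eta).\<close>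

definition hc_comp ::
  "('o, 'a) cat \<Rightarrow> nat list \<Rightarrow> nat \<Rightarrow> bool list \<Rightarrow> nat list \<Rightarrow> bool list \<Rightarrow> nat list \<Rightarrow> nat \<Rightarrow>
   ('o, 'a) mvfun \<Rightarrow> ('o, 'a) mvfun \<Rightarrow> ('o, 'a) mvfun \<Rightarrow>
   ('o list \<Rightarrow> 'a) \<Rightarrow> ('o list \<Rightarrow> 'a) \<Rightarrow> 'o list \<Rightarrow> 'a" where
  "hc_comp C \<sigma> n \<gamma> \<eta> \<delta> \<theta> i F H K \<phi> \<psi> X =
     (let A = take n (drop i X);
          FA = fobj F (map ((!) A) \<sigma>);
          B = take i X @ [FA] @ drop (i + n) X
      in Comp C (farr K (arr_subst C B (Id C FA) (\<phi> A) i \<theta> \<delta>))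
           (Comp C (\<psi> B) (farr H (arr_subst C B (\<phi> A) (Id C FA) i \<eta> \<gamma>))))"

end

theory Submission
  imports Defs
begin

(* For arrows x into c and y out of c write
     side\<^sub>\<phi>(x, y) = G(A[x,y/k]\<tau>) \<circ> \<phi>\<^bsub>A[c/k]\<^esub> \<circ> F(A[y,x/k]\<sigma>),
   so that dinaturality of \<phi> in k says side\<^sub>\<phi>(1\<^sub>a, f) = side\<^sub>\<phi>(f, 1\<^sub>b) for f : a \<rightarrow> b.
   Functoriality of H and K turns the conjugate of side\<^sub>\<psi>(x, y) by K(B[h,g/i]) and H(B[g,h/i])
   into side\<^sub>\<psi>(x \<circ> h, g \<circ> y); combined with dinaturality of \<psi> this shows that
   side\<^sub>\<psi>(h, p) only depends on p \<circ> h. The side of \<phi> \<ast>\<^sub>i \<psi> at (x, y) in the variable A\<^sub>k is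
   such a conjugate of side\<^sub>\<psi>(1, \<phi>\<^sub>A) and therefore equals side\<^sub>\<psi>(side\<^sub>\<phi>(x, y), 1):
   the dinaturality equation of \<phi> transfers to the composite. *)

context
  fixes C :: "('o, 'a) cat"
  assumes category: "category C"
begin

lemma Dom_in_Obj [simp]: "f \<in> Arr C \<Longrightarrow> Dom C f \<in> Obj C"
  and Cod_in_Obj [simp]: "f \<in> Arr C \<Longrightarrow> Cod C f \<in> Obj C"
  and Id_in_Arr [simp]: "a \<in> Obj C \<Longrightarrow> Id C a \<in> Arr C"
  and Dom_Id [simp]: "a \<in> Obj C \<Longrightarrow> Dom C (Id C a) = a"
  and Cod_Id [simp]: "a \<in> Obj C \<Longrightarrow> Cod C (Id C a) = a"
  and Comp_in_Arr [simp]: "\<lbrakk>f \<in> Arr C; g \<in> Arr C; Cod C f = Dom C g\<rbrakk> \<Longrightarrow> Comp C g f \<in> Arr C"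
  and Dom_Comp [simp]: "\<lbrakk>f \<in> Arr C; g \<in> Arr C; Cod C f = Dom C g\<rbrakk> \<Longrightarrow> Dom C (Comp C g f) = Dom C f"
  and Cod_Comp [simp]: "\<lbrakk>f \<in> Arr C; g \<in> Arr C; Cod C f = Dom C g\<rbrakk> \<Longrightarrow> Cod C (Comp C g f) = Cod C g"
  and Comp_Id_left [simp]: "f \<in> Arr C \<Longrightarrow> Comp C (Id C (Cod C f)) f = f"
  using category by (auto simp: category_def)

lemma Comp_assoc:
  "\<lbrakk>f \<in> Arr C; g \<in> Arr C; h \<in> Arr C; Cod C f = Dom C g; Cod C g = Dom C h\<rbrakk> \<Longrightarrow>
   Comp C (Comp C h g) f = Comp C h (Comp C g f)"
  using category unfolding category_def by metis

lemma Comp_Id_Id: "a \<in> Obj C \<Longrightarrow> Comp C (Id C a) (Id C a) = Id C a"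
  using Comp_Id_left[of "Id C a"] by simp

end

lemma mvfunctor_Comp:
  assumes "mvfunctor C \<alpha> F" "length fs = length \<alpha>" "length gs = length \<alpha>"
    "set fs \<subseteq> Arr C" "set gs \<subseteq> Arr C" "tgt_tuple C \<alpha> fs = src_tuple C \<alpha> gs"
  shows "farr F (map (\<lambda>j. if \<alpha> ! j then Comp C (gs ! j) (fs ! j) else Comp C (fs ! j) (gs ! j))
                    [0..<length \<alpha>]) = Comp C (farr F gs) (farr F fs)"
  using assms unfolding mvfunctor_def by blast

definition obj_subst :: "'o list \<Rightarrow> 'o \<Rightarrow> 'o \<Rightarrow> nat \<Rightarrow> nat list \<Rightarrow> bool list \<Rightarrow> 'o list" where
  "obj_subst A X Y i \<sigma> \<alpha> =
     map (\<lambda>j. if \<sigma> ! j = i then (if \<alpha> ! j then Y else X) else A ! (\<sigma> ! j)) [0..<length \<alpha>]"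

lemma length_arr_subst [simp]: "length (arr_subst C A X Y i \<sigma> \<alpha>) = length \<alpha>"
  by (simp add: arr_subst_def)

lemma map_nth_list_update_eq_obj_subst:
  "\<lbrakk>length \<sigma> = length \<alpha>; \<forall>j \<in> set \<sigma>. j < length A\<rbrakk> \<Longrightarrow>
   map ((!) (A[i := c])) \<sigma> = obj_subst A c c i \<sigma> \<alpha>"
  by (auto simp: obj_subst_def nth_list_update intro!: nth_equalityI)

context
  fixes C :: "('o, 'a) cat" and A :: "'o list" and \<sigma> :: "nat list" and \<alpha> :: "bool list"
  assumes category: "category C" and A: "set A \<subseteq> Obj C"
    and \<sigma>: "length \<sigma> = length \<alpha>" "\<forall>j \<in> set \<sigma>. j < length A"
begin

lemma nth_nth_in_Obj: "j < length \<alpha> \<Longrightarrow> A ! (\<sigma> ! j) \<in> Obj C"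
  using A \<sigma> by (metis nth_mem subsetD)

lemma arr_subst_in_Arr: "\<lbrakk>x \<in> Arr C; y \<in> Arr C\<rbrakk> \<Longrightarrow> set (arr_subst C A x y i \<sigma> \<alpha>) \<subseteq> Arr C"
  using nth_nth_in_Obj by (auto simp: arr_subst_def category)

lemma src_tuple_arr_subst:
  "src_tuple C \<alpha> (arr_subst C A x y i \<sigma> \<alpha>) = obj_subst A (Cod C x) (Dom C y) i \<sigma> \<alpha>"
  using nth_nth_in_Obj by (auto simp: arr_subst_def src_tuple_def obj_subst_def category)

lemma tgt_tuple_arr_subst:
  "tgt_tuple C \<alpha> (arr_subst C A x y i \<sigma> \<alpha>) = obj_subst A (Dom C x) (Cod C y) i \<sigma> \<alpha>"
  using nth_nth_in_Obj by (auto simp: arr_subst_def tgt_tuple_def obj_subst_def category)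

context
  fixes F :: "('o, 'a) mvfun"
  assumes F: "mvfunctor C \<alpha> F"
begin

lemma farr_arr_subst_in_Arr [simp]:
  "\<lbrakk>x \<in> Arr C; y \<in> Arr C\<rbrakk> \<Longrightarrow> farr F (arr_subst C A x y i \<sigma> \<alpha>) \<in> Arr C"
  and Dom_farr_arr_subst [simp]:
  "\<lbrakk>x \<in> Arr C; y \<in> Arr C\<rbrakk> \<Longrightarrow>
   Dom C (farr F (arr_subst C A x y i \<sigma> \<alpha>)) = fobj F (obj_subst A (Cod C x) (Dom C y) i \<sigma> \<alpha>)"
  and Cod_farr_arr_subst [simp]:
  "\<lbrakk>x \<in> Arr C; y \<in> Arr C\<rbrakk> \<Longrightarrow>
   Cod C (farr F (arr_subst C A x y i \<sigma> \<alpha>)) = fobj F (obj_subst A (Dom C x) (Cod C y) i \<sigma> \<alpha>)"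
  using F arr_subst_in_Arr src_tuple_arr_subst tgt_tuple_arr_subst
  unfolding mvfunctor_def by auto

lemma farr_arr_subst_Comp:
  assumes "x1 \<in> Arr C" "y1 \<in> Arr C" "x2 \<in> Arr C" "y2 \<in> Arr C"
    and "Cod C x1 = Dom C x2" "Cod C y2 = Dom C y1"
  shows "Comp C (farr F (arr_subst C A x1 y1 i \<sigma> \<alpha>)) (farr F (arr_subst C A x2 y2 i \<sigma> \<alpha>))
       = farr F (arr_subst C A (Comp C x2 x1) (Comp C y1 y2) i \<sigma> \<alpha>)"
proof -
  let ?gs = "arr_subst C A x1 y1 i \<sigma> \<alpha>" and ?fs = "arr_subst C A x2 y2 i \<sigma> \<alpha>"
  have "tgt_tuple C \<alpha> ?fs = src_tuple C \<alpha> ?gs"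
    using assms by (simp add: src_tuple_arr_subst tgt_tuple_arr_subst)
  then have "Comp C (farr F ?gs) (farr F ?fs) = farr F
      (map (\<lambda>j. if \<alpha> ! j then Comp C (?gs ! j) (?fs ! j) else Comp C (?fs ! j) (?gs ! j)) [0..<length \<alpha>])"
    using mvfunctor_Comp[OF F _ _ arr_subst_in_Arr arr_subst_in_Arr] assms by simp
  also have "map (\<lambda>j. if \<alpha> ! j then Comp C (?gs ! j) (?fs ! j) else Comp C (?fs ! j) (?gs ! j))
          [0..<length \<alpha>] = arr_subst C A (Comp C x2 x1) (Comp C y1 y2) i \<sigma> \<alpha>"
    using nth_nth_in_Obj by (auto simp: arr_subst_def Comp_Id_Id[OF category])
  finally show ?thesis .
qed

end

end

definition dinat_side ::
  "('o, 'a) cat \<Rightarrow> ('o, 'a) mvfun \<Rightarrow> bool list \<Rightarrow> nat list \<Rightarrow> ('o, 'a) mvfun \<Rightarrow> bool list \<Rightarrow>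
   nat list \<Rightarrow> ('o list \<Rightarrow> 'a) \<Rightarrow> nat \<Rightarrow> 'o list \<Rightarrow> 'a \<Rightarrow> 'a \<Rightarrow> 'o \<Rightarrow> 'a" where
  "dinat_side C F \<alpha> \<sigma> G \<beta> \<tau> \<phi> i A x y c =
     Comp C (farr G (arr_subst C A x y i \<tau> \<beta>))
       (Comp C (\<phi> (A[i := c])) (farr F (arr_subst C A y x i \<sigma> \<alpha>)))"

lemma dinatural_iff_dinat_side:
  "dinatural C F \<alpha> \<sigma> G \<beta> \<tau> n \<phi> i \<longleftrightarrow> i < n \<and>
     (\<forall>A f. length A = n \<longrightarrow> set A \<subseteq> Obj C \<longrightarrow> f \<in> Arr C \<longrightarrow>
        dinat_side C F \<alpha> \<sigma> G \<beta> \<tau> \<phi> i A (Id C (Dom C f)) f (Dom C f)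
        = dinat_side C F \<alpha> \<sigma> G \<beta> \<tau> \<phi> i A f (Id C (Cod C f)) (Cod C f))"
  by (simp add: dinatural_def dinat_side_def Let_def)

locale mv_transformation =
  fixes C :: "('o, 'a) cat" and F :: "('o, 'a) mvfun" and \<alpha> :: "bool list"
    and G :: "('o, 'a) mvfun" and \<beta> :: "bool list" and \<sigma> \<tau> :: "nat list" and n :: nat
    and \<phi> :: "'o list \<Rightarrow> 'a"
  assumes category: "category C" and F: "mvfunctor C \<alpha> F" and G: "mvfunctor C \<beta> G"
    and transformation: "transformation C F \<alpha> G \<beta> \<sigma> \<tau> n \<phi>"
begin

declare category [simp]

abbreviation side where "side \<equiv> dinat_side C F \<alpha> \<sigma> G \<beta> \<tau> \<phi>"

lemma length_\<sigma>: "length \<sigma> = length \<alpha>" and length_\<tau>: "length \<tau> = length \<beta>"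
  and \<sigma>_less: "\<forall>j \<in> set \<sigma>. j < n" and \<tau>_less: "\<forall>j \<in> set \<tau>. j < n"
  using transformation by (simp_all add: transformation_def)

context
  fixes A :: "'o list"
  assumes length_A: "length A = n" and A: "set A \<subseteq> Obj C"
begin

lemma \<sigma>_less_length: "\<forall>j \<in> set \<sigma>. j < length A" and \<tau>_less_length: "\<forall>j \<in> set \<tau>. j < length A"
  using \<sigma>_less \<tau>_less length_A by simp_all

lemmas F_arr_subst [simp] =
  farr_arr_subst_in_Arr[OF category A length_\<sigma> \<sigma>_less_length F]
  Dom_farr_arr_subst[OF category A length_\<sigma> \<sigma>_less_length F]
  Cod_farr_arr_subst[OF category A length_\<sigma> \<sigma>_less_length F]
lemmas G_arr_subst [simp] =
  farr_arr_subst_in_Arr[OF category A length_\<tau> \<tau>_less_length G]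
  Dom_farr_arr_subst[OF category A length_\<tau> \<tau>_less_length G]
  Cod_farr_arr_subst[OF category A length_\<tau> \<tau>_less_length G]
lemmas F_arr_subst_Comp = farr_arr_subst_Comp[OF category A length_\<sigma> \<sigma>_less_length F]
lemmas G_arr_subst_Comp = farr_arr_subst_Comp[OF category A length_\<tau> \<tau>_less_length G]

lemma component_update [simp]:
  assumes "c \<in> Obj C"
  shows "\<phi> (A[i := c]) \<in> Arr C"
    and "Dom C (\<phi> (A[i := c])) = fobj F (obj_subst A c c i \<sigma> \<alpha>)"
    and "Cod C (\<phi> (A[i := c])) = fobj G (obj_subst A c c i \<tau> \<beta>)"
proof -
  have "length (A[i := c]) = n" "set (A[i := c]) \<subseteq> Obj C"
    using length_A A assms set_update_subset_insert by fastforce+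
  then show "\<phi> (A[i := c]) \<in> Arr C" "Dom C (\<phi> (A[i := c])) = fobj F (obj_subst A c c i \<sigma> \<alpha>)"
    "Cod C (\<phi> (A[i := c])) = fobj G (obj_subst A c c i \<tau> \<beta>)"
    using transformation map_nth_list_update_eq_obj_subst[OF length_\<sigma> \<sigma>_less_length]
      map_nth_list_update_eq_obj_subst[OF length_\<tau> \<tau>_less_length]
    by (simp_all add: transformation_def)
qed

lemma dinat_side_Comp:
  assumes x: "x \<in> Arr C" "Cod C x = c" and y: "y \<in> Arr C" "Dom C y = c"
    and h: "h \<in> Arr C" "Cod C h = Dom C x" and g: "g \<in> Arr C" "Cod C y = Dom C g"
  shows "Comp C (farr G (arr_subst C A h g i \<tau> \<beta>))
           (Comp C (side i A x y c) (farr F (arr_subst C A g h i \<sigma> \<alpha>)))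
         = side i A (Comp C x h) (Comp C g y) c"
proof -
  let ?G0 = "farr G (arr_subst C A h g i \<tau> \<beta>)" and ?G1 = "farr G (arr_subst C A x y i \<tau> \<beta>)"
  let ?F0 = "farr F (arr_subst C A g h i \<sigma> \<alpha>)" and ?F1 = "farr F (arr_subst C A y x i \<sigma> \<alpha>)"
  let ?P = "\<phi> (A[i := c])"
  have "c \<in> Obj C"
    using x by auto
  then have "Comp C ?G0 (Comp C (Comp C ?G1 (Comp C ?P ?F1)) ?F0)
      = Comp C (Comp C ?G0 ?G1) (Comp C ?P (Comp C ?F1 ?F0))"
    using x y h g by (simp add: Comp_assoc)
  also have "\<dots> = side i A (Comp C x h) (Comp C g y) c"
    using x y h g \<open>c \<in> Obj C\<close> by (simp add: dinat_side_def F_arr_subst_Comp G_arr_subst_Comp)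
  finally show ?thesis
    by (simp add: dinat_side_def)
qed

lemma dinat_side_slide:
  assumes dinatural: "dinatural C F \<alpha> \<sigma> G \<beta> \<tau> n \<phi> i"
    and h: "h \<in> Arr C" "Cod C h = c" and p: "p \<in> Arr C" "Dom C p = c"
  shows "side i A h p c = side i A (Comp C p h) (Id C (Cod C p)) (Cod C p)"
proof -
  let ?Y = "Cod C p"
  have c: "c \<in> Obj C"
    using h by auto
  have "Comp C (Id C c) h = h"
    using Comp_Id_left[OF category h(1)] h by simp
  then have "side i A h p c = Comp C (farr G (arr_subst C A h (Id C ?Y) i \<tau> \<beta>))
      (Comp C (side i A (Id C c) p c) (farr F (arr_subst C A (Id C ?Y) h i \<sigma> \<alpha>)))"
    using dinat_side_Comp[of "Id C c" c p h "Id C ?Y"] h p c by simp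
  also have "side i A (Id C c) p c = side i A p (Id C ?Y) ?Y"
    using dinatural p length_A A by (auto simp: dinatural_iff_dinat_side)
  also have "Comp C (farr G (arr_subst C A h (Id C ?Y) i \<tau> \<beta>))
      (Comp C (side i A p (Id C ?Y) ?Y) (farr F (arr_subst C A (Id C ?Y) h i \<sigma> \<alpha>)))
      = side i A (Comp C p h) (Id C ?Y) ?Y"
    using dinat_side_Comp[of p ?Y "Id C ?Y" h "Id C ?Y"] h p by (simp add: Comp_Id_Id)
  finally show ?thesis .
qed

end

end

lemma drop_sum_list_concat:
  "drop (sum_list (map length (take u cs))) (concat cs) = concat (drop u cs)"
  by (induction cs arbitrary: u) (auto simp: take_Cons' drop_Cons')

lemma plug_concat:
  assumes "ws = map length cs"
  shows "plug ws g (concat cs) = map (\<lambda>u. g u (cs ! u)) [0..<length cs]"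
proof -
  have "take (length (cs ! u)) (drop (sum_list (take u (map length cs))) (concat cs)) = cs ! u"
    if "u < length cs" for u
    using that by (simp add: take_map drop_sum_list_concat Cons_nth_drop_Suc[symmetric])
  then show ?thesis
    using assms by (auto simp: plug_def)
qed

lemma nth_arr_subst:
  "j < length \<alpha> \<Longrightarrow> arr_subst C A X Y i \<sigma> \<alpha> ! j
     = (if \<sigma> ! j = i then (if \<alpha> ! j then Y else X) else Id C (A ! (\<sigma> ! j)))"
  by (simp add: arr_subst_def)

lemma arr_subst_append:
  "length \<sigma>1 = length \<alpha>1 \<Longrightarrow>
   arr_subst C A X Y i (\<sigma>1 @ \<sigma>2) (\<alpha>1 @ \<alpha>2) = arr_subst C A X Y i \<sigma>1 \<alpha>1 @ arr_subst C A X Y i \<sigma>2 \<alpha>2"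
  by (auto simp: arr_subst_def nth_append intro!: nth_equalityI)

lemma arr_subst_concat:
  "\<forall>u \<in> set us. length (s u) = length (v u) \<Longrightarrow>
   arr_subst C A X Y i (concat (map s us)) (concat (map v us))
   = concat (map (\<lambda>u. arr_subst C A X Y i (s u) (v u)) us)"
  by (induction us) (auto simp: arr_subst_append, simp add: arr_subst_def)

lemma arr_subst_map_Not: "arr_subst C A X Y i \<sigma> (map Not \<alpha>) = arr_subst C A Y X i \<sigma> \<alpha>"
  by (simp add: arr_subst_def)

lemma arr_subst_map_add:
  "\<lbrakk>length \<sigma> = length \<alpha>; \<forall>j \<in> set \<sigma>. j < n; i + n \<le> length X\<rbrakk> \<Longrightarrow>
   arr_subst C X P Q (i + k) (map ((+) i) \<sigma>) \<alpha> = arr_subst C (take n (drop i X)) P Q k \<sigma> \<alpha>"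
  by (auto simp: arr_subst_def intro!: nth_equalityI)

lemma arr_subst_singleton: "j \<noteq> i \<Longrightarrow> arr_subst C A X Y i [j] [v] = [Id C (A ! j)]"
  by (simp add: arr_subst_def)

lemma arr_subst_list_update: "arr_subst C (A[i := c]) X Y i \<sigma> \<alpha> = arr_subst C A X Y i \<sigma> \<alpha>"
  by (auto simp: arr_subst_def nth_list_update intro!: nth_equalityI)

lemma nth_splice_vshift:
  assumes "b \<noteq> i" "b < m" "i < m" "length X = m - 1 + n"
  shows "(take i X @ [Z] @ drop (i + n) X) ! b = X ! vshift n i b"
  using assms by (cases "b < i") (auto simp: nth_append vshift_def add.commute)

lemma hc_cod_eq_hc_dom: "hc_cod \<alpha> \<beta> \<delta> \<theta> i F G K = hc_dom \<beta> \<alpha> \<delta> \<theta> i G F K"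
  by (simp add: hc_cod_def hc_dom_def hc_cod_widths_def hc_dom_widths_def)

lemma hc_cod_var_eq_hc_dom_var: "hc_cod_var \<alpha> \<beta> \<delta> \<theta> i = hc_dom_var \<beta> \<alpha> \<delta> \<theta> i"
  by (simp add: hc_cod_var_def hc_dom_var_def)

lemma hc_cod_type_eq_hc_dom_type: "hc_cod_type \<sigma> \<tau> n \<delta> \<theta> i = hc_dom_type \<tau> \<sigma> n \<delta> \<theta> i"
  by (simp add: hc_cod_type_def hc_dom_type_def)

lemma farr_hc_dom_arr_subst:
  assumes X: "length X = m - 1 + n" and "i < m" "k < n"
    and \<sigma>: "length \<sigma> = length \<alpha>" "\<forall>j \<in> set \<sigma>. j < n" and \<tau>: "length \<tau> = length \<beta>" "\<forall>j \<in> set \<tau>. j < n"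
    and \<eta>: "length \<eta> = length \<gamma>" "\<forall>j \<in> set \<eta>. j < m"
  defines "A \<equiv> take n (drop i X)"
  shows "farr (hc_dom \<alpha> \<beta> \<gamma> \<eta> i F G H)
           (arr_subst C X P Q (i + k) (hc_dom_type \<sigma> \<tau> n \<gamma> \<eta> i) (hc_dom_var \<alpha> \<beta> \<gamma> \<eta> i))
         = farr H (arr_subst C (take i X @ [Z] @ drop (i + n) X)
             (farr G (arr_subst C A Q P k \<tau> \<beta>)) (farr F (arr_subst C A P Q k \<sigma> \<alpha>)) i \<eta> \<gamma>)"
proof -
  define chunk where "chunk u = (if \<eta> ! u = i
      then (if \<gamma> ! u then arr_subst C A P Q k \<sigma> \<alpha> else arr_subst C A Q P k \<tau> \<beta>)
      else [Id C (X ! vshift n i (\<eta> ! u))])" for u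
  have "i + n \<le> length X"
    using assms by simp
  then have subst: "arr_subst C X P Q (i + k) (hc_dom_type \<sigma> \<tau> n \<gamma> \<eta> i) (hc_dom_var \<alpha> \<beta> \<gamma> \<eta> i)
      = concat (map chunk [0..<length \<gamma>])"
    unfolding hc_dom_type_def hc_dom_var_def using assms
    by (subst arr_subst_concat)
      (auto simp: chunk_def A_def arr_subst_map_Not arr_subst_map_add arr_subst_singleton vshift_def
        intro!: arg_cong[where f = concat] map_cong)
  have widths: "hc_dom_widths \<alpha> \<beta> \<gamma> \<eta> i = map length (map chunk [0..<length \<gamma>])"
    using \<sigma> \<tau> by (auto simp: hc_dom_widths_def chunk_def)
  have splice: "X ! vshift n i (\<eta> ! u) = (take i X @ [Z] @ drop (i + n) X) ! (\<eta> ! u)"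
    if "u < length \<gamma>" "\<eta> ! u \<noteq> i" for u
    using nth_splice_vshift[OF that(2) _ \<open>i < m\<close> X] \<eta> that(1) by (metis nth_mem)
  show ?thesis
    unfolding hc_dom_def mvfun.select_convs subst plug_concat[OF widths] using \<eta> splice
    by (auto simp: chunk_def nth_arr_subst intro!: arg_cong[where f = "farr H"] nth_equalityI)
qed

lemma farr_hc_cod_arr_subst:
  assumes X: "length X = m - 1 + n" and "i < m" "k < n"
    and \<sigma>: "length \<sigma> = length \<alpha>" "\<forall>j \<in> set \<sigma>. j < n" and \<tau>: "length \<tau> = length \<beta>" "\<forall>j \<in> set \<tau>. j < n"
    and \<theta>: "length \<theta> = length \<delta>" "\<forall>j \<in> set \<theta>. j < m"
  defines "A \<equiv> take n (drop i X)"
  shows "farr (hc_cod \<alpha> \<beta> \<delta> \<theta> i F G K)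
           (arr_subst C X P Q (i + k) (hc_cod_type \<sigma> \<tau> n \<delta> \<theta> i) (hc_cod_var \<alpha> \<beta> \<delta> \<theta> i))
         = farr K (arr_subst C (take i X @ [Z] @ drop (i + n) X)
             (farr F (arr_subst C A Q P k \<sigma> \<alpha>)) (farr G (arr_subst C A P Q k \<tau> \<beta>)) i \<theta> \<delta>)"
  unfolding hc_cod_eq_hc_dom hc_cod_type_eq_hc_dom_type hc_cod_var_eq_hc_dom_var A_def
  using farr_hc_dom_arr_subst[OF assms(1-3) \<tau> \<sigma> \<theta>] .

lemma take_drop_list_update:
  assumes "i + n \<le> length X" "k < n"
  shows "take n (drop i (X[i + k := c])) = (take n (drop i X))[k := c]"
    and "take i (X[i + k := c]) = take i X"
    and "drop (i + n) (X[i + k := c]) = drop (i + n) X"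
  using assms by (auto simp: nth_list_update intro!: nth_equalityI)

lemma hc_comp_list_update:
  fixes X :: "'o list" and c :: 'o and F :: "('o, 'a) mvfun" and \<sigma> :: "nat list"
  assumes "i + n \<le> length X" "k < n"
  defines "A \<equiv> (take n (drop i X))[k := c]"
  defines "FA \<equiv> fobj F (map ((!) A) \<sigma>)"
  shows "hc_comp C \<sigma> n \<gamma> \<eta> \<delta> \<theta> i F H K \<phi> \<psi> (X[i + k := c])
       = dinat_side C H \<gamma> \<eta> K \<delta> \<theta> \<psi> i (take i X @ [Z] @ drop (i + n) X) (Id C FA) (\<phi> A) FA"
proof -
  have "take i X @ [FA] @ drop (i + n) X = (take i X @ [Z] @ drop (i + n) X)[i := FA]"
    using assms(1) by (simp add: list_update_append)
  then show ?thesis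
    using take_drop_list_update[OF assms(1,2)]
    by (simp add: hc_comp_def dinat_side_def Let_def A_def[symmetric] FA_def[symmetric]
        arr_subst_list_update)
qed

lemma dinat_side_hc_comp_unfold:
  fixes Z c :: 'o and x y :: 'a
  assumes \<phi>: "transformation C F \<alpha> G \<beta> \<sigma> \<tau> n \<phi>" and \<psi>: "transformation C H \<gamma> K \<delta> \<eta> \<theta> m \<psi>"
    and X: "length X = m - 1 + n" and "i < m" "k < n"
  defines "A \<equiv> take n (drop i X)" and "B \<equiv> take i X @ [Z] @ drop (i + n) X"
  defines "hA \<equiv> farr F (arr_subst C A y x k \<sigma> \<alpha>)" and "gA \<equiv> farr G (arr_subst C A x y k \<tau> \<beta>)"
  defines "FA \<equiv> fobj F (map ((!) (A[k := c])) \<sigma>)"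
  shows "dinat_side C (hc_dom \<alpha> \<beta> \<gamma> \<eta> i F G H) (hc_dom_var \<alpha> \<beta> \<gamma> \<eta> i) (hc_dom_type \<sigma> \<tau> n \<gamma> \<eta> i)
           (hc_cod \<alpha> \<beta> \<delta> \<theta> i F G K) (hc_cod_var \<alpha> \<beta> \<delta> \<theta> i) (hc_cod_type \<sigma> \<tau> n \<delta> \<theta> i)
           (hc_comp C \<sigma> n \<gamma> \<eta> \<delta> \<theta> i F H K \<phi> \<psi>) (i + k) X x y c
       = Comp C (farr K (arr_subst C B hA gA i \<theta> \<delta>))
           (Comp C (dinat_side C H \<gamma> \<eta> K \<delta> \<theta> \<psi> i B (Id C FA) (\<phi> (A[k := c])) FA)
             (farr H (arr_subst C B gA hA i \<eta> \<gamma>)))"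
proof -
  have shapes: "length \<sigma> = length \<alpha>" "\<forall>j \<in> set \<sigma>. j < n" "length \<tau> = length \<beta>" "\<forall>j \<in> set \<tau>. j < n"
    "length \<eta> = length \<gamma>" "\<forall>j \<in> set \<eta>. j < m" "length \<theta> = length \<delta>" "\<forall>j \<in> set \<theta>. j < m"
    using \<phi> \<psi> by (simp_all add: transformation_def)
  have "i + n \<le> length X"
    using X \<open>i < m\<close> by simp
  then have hc_comp: "hc_comp C \<sigma> n \<gamma> \<eta> \<delta> \<theta> i F H K \<phi> \<psi> (X[i + k := c])
      = dinat_side C H \<gamma> \<eta> K \<delta> \<theta> \<psi> i B (Id C FA) (\<phi> (A[k := c])) FA"
    using hc_comp_list_update[OF _ \<open>k < n\<close>] by (simp add: A_def B_def FA_def)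
  have hc_dom: "farr (hc_dom \<alpha> \<beta> \<gamma> \<eta> i F G H)
      (arr_subst C X y x (i + k) (hc_dom_type \<sigma> \<tau> n \<gamma> \<eta> i) (hc_dom_var \<alpha> \<beta> \<gamma> \<eta> i))
      = farr H (arr_subst C B gA hA i \<eta> \<gamma>)"
    using farr_hc_dom_arr_subst[OF X \<open>i < m\<close> \<open>k < n\<close> shapes(1-6)] by (simp add: A_def B_def hA_def gA_def)
  have hc_cod: "farr (hc_cod \<alpha> \<beta> \<delta> \<theta> i F G K)
      (arr_subst C X x y (i + k) (hc_cod_type \<sigma> \<tau> n \<delta> \<theta> i) (hc_cod_var \<alpha> \<beta> \<delta> \<theta> i))
      = farr K (arr_subst C B hA gA i \<theta> \<delta>)"
    using farr_hc_cod_arr_subst[OF X \<open>i < m\<close> \<open>k < n\<close> shapes(1-4,7,8)] by (simp add: A_def B_def hA_def gA_def)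
  show ?thesis
    unfolding dinat_side_def[of C "hc_dom \<alpha> \<beta> \<gamma> \<eta> i F G H"] hc_comp hc_dom hc_cod ..
qed

text \<open>The entry of B at position i is never read; choosing Cod \<Phi> makes the right-hand side
  a function of \<Phi> alone.\<close>

lemma dinat_side_hc_comp:
  assumes \<phi>: "mv_transformation C F \<alpha> G \<beta> \<sigma> \<tau> n \<phi>" and \<psi>: "mv_transformation C H \<gamma> K \<delta> \<eta> \<theta> m \<psi>"
    and dinatural: "dinatural C H \<gamma> \<eta> K \<delta> \<theta> m \<psi> i" and "k < n"
    and X: "length X = m - 1 + n" "set X \<subseteq> Obj C"
    and x: "x \<in> Arr C" "Cod C x = c" and y: "y \<in> Arr C" "Dom C y = c"
  defines "\<Phi> \<equiv> dinat_side C F \<alpha> \<sigma> G \<beta> \<tau> \<phi> k (take n (drop i X)) x y c"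
  shows "dinat_side C (hc_dom \<alpha> \<beta> \<gamma> \<eta> i F G H) (hc_dom_var \<alpha> \<beta> \<gamma> \<eta> i) (hc_dom_type \<sigma> \<tau> n \<gamma> \<eta> i)
           (hc_cod \<alpha> \<beta> \<delta> \<theta> i F G K) (hc_cod_var \<alpha> \<beta> \<delta> \<theta> i) (hc_cod_type \<sigma> \<tau> n \<delta> \<theta> i)
           (hc_comp C \<sigma> n \<gamma> \<eta> \<delta> \<theta> i F H K \<phi> \<psi>) (i + k) X x y c
       = dinat_side C H \<gamma> \<eta> K \<delta> \<theta> \<psi> i (take i X @ [Cod C \<Phi>] @ drop (i + n) X)
           \<Phi> (Id C (Cod C \<Phi>)) (Cod C \<Phi>)"
proof -
  interpret \<phi>: mv_transformation C F \<alpha> G \<beta> \<sigma> \<tau> n \<phi> by (rule \<phi>)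
  interpret \<psi>: mv_transformation C H \<gamma> K \<delta> \<eta> \<theta> m \<psi> by (rule \<psi>)
  have "i < m"
    using dinatural by (simp add: dinatural_def)
  define A where "A = take n (drop i X)"
  define hA where "hA = farr F (arr_subst C A y x k \<sigma> \<alpha>)"
  define gA where "gA = farr G (arr_subst C A x y k \<tau> \<beta>)"
  define P where "P = \<phi> (A[k := c])"
  define FA where "FA = fobj F (map ((!) (A[k := c])) \<sigma>)"
  define B where "B = take i X @ [Cod C \<Phi>] @ drop (i + n) X"
  have A: "length A = n" "set A \<subseteq> Obj C"
    using X \<open>i < m\<close> by (auto simp: A_def dest: in_set_takeD in_set_dropD)
  have "c \<in> Obj C" and "FA = fobj F (obj_subst A c c k \<sigma> \<alpha>)"
    using x map_nth_list_update_eq_obj_subst[OF \<phi>.length_\<sigma> \<phi>.\<sigma>_less_length[OF A]] by (auto simp: FA_def)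
  then have typing: "hA \<in> Arr C" "gA \<in> Arr C" "P \<in> Arr C" "Cod C hA = FA" "Dom C P = FA"
    "Cod C P = Dom C gA"
    using x y A by (simp_all add: hA_def gA_def P_def)
  have \<Phi>: "\<Phi> = Comp C (Comp C gA P) hA" and "Cod C \<Phi> = Cod C gA"
    using typing by (simp_all add: \<Phi>_def dinat_side_def A_def[symmetric] hA_def gA_def P_def Comp_assoc)
  then have B: "length B = m" "set B \<subseteq> Obj C"
    using X \<open>i < m\<close> typing by (auto simp: B_def dest: in_set_takeD in_set_dropD)
  have "dinat_side C (hc_dom \<alpha> \<beta> \<gamma> \<eta> i F G H) (hc_dom_var \<alpha> \<beta> \<gamma> \<eta> i) (hc_dom_type \<sigma> \<tau> n \<gamma> \<eta> i)
           (hc_cod \<alpha> \<beta> \<delta> \<theta> i F G K) (hc_cod_var \<alpha> \<beta> \<delta> \<theta> i) (hc_cod_type \<sigma> \<tau> n \<delta> \<theta> i)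
           (hc_comp C \<sigma> n \<gamma> \<eta> \<delta> \<theta> i F H K \<phi> \<psi>) (i + k) X x y c
      = Comp C (farr K (arr_subst C B hA gA i \<theta> \<delta>))
          (Comp C (\<psi>.side i B (Id C FA) P FA) (farr H (arr_subst C B gA hA i \<eta> \<gamma>)))"
    using dinat_side_hc_comp_unfold[OF \<phi>.transformation \<psi>.transformation X(1) \<open>i < m\<close> \<open>k < n\<close>]
    by (simp add: A_def B_def hA_def gA_def P_def FA_def)
  also have "\<dots> = \<psi>.side i B (Comp C (Id C FA) hA) (Comp C gA P) FA"
    using \<psi>.dinat_side_Comp[OF B, of "Id C FA" FA P hA gA i] typing by auto
  also have "\<dots> = \<psi>.side i B \<Phi> (Id C (Cod C \<Phi>)) (Cod C \<Phi>)"
    using \<psi>.dinat_side_slide[OF B dinatural, of hA FA "Comp C gA P"] typing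
      Comp_Id_left[OF \<psi>.category, of hA] \<Phi> \<open>Cod C \<Phi> = Cod C gA\<close> by simp
  finally show ?thesis
    by (simp add: B_def)
qed

theorem mainTheorem10:
  fixes C :: "('o, 'a) cat"
    and F G H K :: "('o, 'a) mvfun"
    and \<alpha> \<beta> \<gamma> \<delta> :: "bool list"
    and \<sigma> \<tau> \<eta> \<theta> :: "nat list"
    and n m i k :: nat
    and \<phi> \<psi> :: "'o list \<Rightarrow> 'a"
  assumes "category C"
    and "mvfunctor C \<alpha> F" and "mvfunctor C \<beta> G"
    and "mvfunctor C \<gamma> H" and "mvfunctor C \<delta> K"
    and "transformation C F \<alpha> G \<beta> \<sigma> \<tau> n \<phi>"
    and "transformation C H \<gamma> K \<delta> \<eta> \<theta> m \<psi>"
    and "dinatural C F \<alpha> \<sigma> G \<beta> \<tau> n \<phi> k"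
    and "dinatural C H \<gamma> \<eta> K \<delta> \<theta> m \<psi> i"
  shows "dinatural C
           (hc_dom \<alpha> \<beta> \<gamma> \<eta> i F G H) (hc_dom_var \<alpha> \<beta> \<gamma> \<eta> i) (hc_dom_type \<sigma> \<tau> n \<gamma> \<eta> i)
           (hc_cod \<alpha> \<beta> \<delta> \<theta> i F G K) (hc_cod_var \<alpha> \<beta> \<delta> \<theta> i) (hc_cod_type \<sigma> \<tau> n \<delta> \<theta> i)
           (m - 1 + n) (hc_comp C \<sigma> n \<gamma> \<eta> \<delta> \<theta> i F H K \<phi> \<psi>) (i + k)"
proof -
  have \<phi>: "mv_transformation C F \<alpha> G \<beta> \<sigma> \<tau> n \<phi>" and \<psi>: "mv_transformation C H \<gamma> K \<delta> \<eta> \<theta> m \<psi>"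
    using assms(1-7) by (simp_all add: mv_transformation_def)
  have "k < n" and "i < m"
    using assms(8,9) by (simp_all add: dinatural_def)
  have \<phi>_dinatural: "dinat_side C F \<alpha> \<sigma> G \<beta> \<tau> \<phi> k (take n (drop i X)) (Id C (Dom C f)) f (Dom C f)
      = dinat_side C F \<alpha> \<sigma> G \<beta> \<tau> \<phi> k (take n (drop i X)) f (Id C (Cod C f)) (Cod C f)"
    if "length X = m - 1 + n" "set X \<subseteq> Obj C" "f \<in> Arr C" for X f
  proof -
    have "set (take n (drop i X)) \<subseteq> Obj C"
      using that(2) by (meson order_trans set_drop_subset set_take_subset)
    then show ?thesis
      using assms(8) that(1,3) \<open>i < m\<close> by (simp add: dinatural_iff_dinat_side)
  qed
  show ?thesis
    using \<open>k < n\<close> \<open>i < m\<close> assms(1)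
    by (auto simp: dinatural_iff_dinat_side dinat_side_hc_comp[OF \<phi> \<psi> assms(9)] \<phi>_dinatural)
qed

end
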